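(* For every contention-resolution protocol of the form described in the context (i.e. every choice of emission probabilities $p_w$, one for each binary word $w$ of length $<k$), one can associate $m+1$ real numbers $z_0,\dots,z_m$ in $[0,1]$ with $0=z_0<z_1<\dots<z_{m-1}<z_m=1$ such that the probability of success (non-collision) of the protocol is $$\rho=\sum_{i\in\{1,\dots,m\}}(z_i-z_{i-1})f'(z_{i-1}),$$ and the probabilities used in the rounds of selection are given by $$p_w=\frac{z_{\#(w)2^{k-l(w)}+2^{k-l(w)}}-z_{\#(w)2^{k-l(w)}+2^{k-l(w)-1}}}{z_{\#(w)2^{k-l(w)}+2^{k-l(w)}}-z_{\#(w)2^{k-l(w)}}}.$$ Conversely, to every family of real numbers $z_0,\dots,z_m$ with $0=z_0<z_1<\dots<z_{m-1}<z_m=1$ one can associate such a selection protocol, with probabilities $p_w$ given by the second formula, whose probability of success is given by the first formula.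
   Context: A random number $n\ge 1$ of stations contend for a channel; $q_n\ge 0$ is the probability that exactly $n$ stations contend, $\sum_{n\geq1}q_n=1$, and $f(x)=\sum_{n\geq1}q_nx^n$ is its generating function. Contention is resolved in $k$ rounds (mini-slots) of selection, and $m=2^k$. For a word $w$ over the alphabet $\{0,1\}$, $l(w)$ denotes its length and $\#(w)$ the integer whose binary representation is $w$. At round $t\in\{1,\dots,k\}$, each station not yet eliminated emits a signal with probability $p_w$, where $w=r(1)\dots r(t-1)$ is the word of previous try-bits, $r(s)\in\{0,1\}$ indicating whether at least one station emitted at round $s$ (so at round 1 the probability is $p_{\emptyset}$). A station that does not emit and hears a signal from another station withdraws; all other stations remain. The protocol succeeds if exactly one station remains after the $k$ rounds; $\rho$ denotes this success probability. *)

theory Defs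
  imports "HOL-Analysis.Analysis"
begin

text \<open>Words over {0,1} are bool lists, True = 1; the head of the list is r(1).
  bin_val w is the integer whose binary representation is w (most significant bit first).\<close>
definition bin_val :: "bool list \<Rightarrow> nat" where
  "bin_val w = foldl (\<lambda>a b. 2 * a + (if b then 1 else 0)) 0 w"

text \<open>succ_prob p r w j: probability that exactly one station remains after the
  remaining r rounds, given that the history of try-bits so far is w and j stations
  are still in contention. Each of the j stations emits independently with
  probability p w; if e \<ge> 1 stations emit, exactly those e remain and the try-bit is 1;
  if none emits, all j remain and the try-bit is 0.\<close>
fun succ_prob :: "(bool list \<Rightarrow> real) \<Rightarrow> nat \<Rightarrow> bool list \<Rightarrow> nat \<Rightarrow> real" where
  "succ_prob p 0 w j = (if j = 1 then 1 else 0)"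
| "succ_prob p (Suc r) w j =
     (\<Sum>e = 1..j. real (j choose e) * p w ^ e * (1 - p w) ^ (j - e)
                    * succ_prob p r (w @ [True]) e)
     + (1 - p w) ^ j * succ_prob p r (w @ [False]) j"

text \<open>Success probability rho of the protocol p with k rounds, when exactly n stations
  contend with probability q n.\<close>
definition rho :: "(nat \<Rightarrow> real) \<Rightarrow> nat \<Rightarrow> (bool list \<Rightarrow> real) \<Rightarrow> real" where
  "rho q k p = (\<Sum>n. q n * succ_prob p k [] n)"

definition genfun :: "(nat \<Rightarrow> real) \<Rightarrow> real \<Rightarrow> real" where
  "genfun q x = (\<Sum>n. q n * x ^ n)"

text \<open>The probability p_w expressed through z_0,...,z_m (m = 2^k).\<close>
definition p_of_z :: "nat \<Rightarrow> (nat \<Rightarrow> real) \<Rightarrow> bool list \<Rightarrow> real" where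
  "p_of_z k z w =
     (let a = bin_val w * 2 ^ (k - length w) in
      (z (a + 2 ^ (k - length w)) - z (a + 2 ^ (k - length w - 1)))
      / (z (a + 2 ^ (k - length w)) - z a))"

end

theory Submission
  imports Defs
begin

text \<open>A protocol and a point family z correspond through the dyadic tree of try-bit
  histories: the history w of length k - r owns the block of 2^r consecutive cells
  starting at index bin_val w * 2^r, and p_w is the proportion of that block taken by its
  upper half (the stations that emit). If j stations are in contention at w, the
  probability that the remaining rounds isolate exactly one of them, multiplied by the
  j-th power of the block length, is the left Riemann sum of the derivative of
  x \<mapsto> (x - z_a)^j over the cells of the block; the binomial theorem makes this
  invariant propagate from the two halves to the block. At the root the Riemann sums
  weighted by q_n add up to the sum of (z_i - z_(i-1)) f'(z_(i-1)).\<close>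

lemma sum_binomial_derivative:
  fixes y L :: "'a::comm_ring_1"
  shows "(\<Sum>e=1..j. of_nat (j choose e) * (of_nat e * y^(e-1)) * L^(j-e)) = of_nat j * (y+L)^(j-1)"
proof (cases j)
  case 0
  then show ?thesis by simp
next
  case (Suc n)
  have "(\<Sum>e=1..Suc n. of_nat (Suc n choose e) * (of_nat e * y^(e-1)) * L^(Suc n-e))
      = (\<Sum>e=0..n. of_nat (Suc n choose Suc e) * (of_nat (Suc e) * y^e) * L^(n-e) :: 'a)"
    unfolding One_nat_def sum.shift_bounds_cl_Suc_ivl by simp
  also have "\<dots> = (\<Sum>e=0..n. of_nat (Suc n) * (of_nat (n choose e) * y^e * L^(n-e)))"
  proof (rule sum.cong[OF refl])
    fix e
    have "of_nat (Suc n choose Suc e) * of_nat (Suc e) = (of_nat (Suc n) * of_nat (n choose e) :: 'a)"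
      using Suc_times_binomial[of e n] by (metis of_nat_mult mult.commute)
    then show "of_nat (Suc n choose Suc e) * (of_nat (Suc e) * y^e) * L^(n-e)
       = of_nat (Suc n) * (of_nat (n choose e) * y^e * L^(n-e))"
      by (metis (no_types, lifting) mult.assoc mult.left_commute)
  qed
  also have "\<dots> = of_nat (Suc n) * (y+L)^n"
    by (simp add: binomial_ring sum_distrib_left atLeast0AtMost)
  finally show ?thesis using Suc by simp
qed

lemma
  fixes q :: "nat \<Rightarrow> real"
  assumes q_nonneg: "\<And>n. q n \<ge> 0" and q_summable: "summable q" and x: "\<bar>x\<bar> < 1"
  shows summable_genfun_deriv: "summable (\<lambda>n. q n * (real n * x^(n-1)))"
    and deriv_genfun: "deriv (genfun q) x = (\<Sum>n. q n * (real n * x^(n-1)))"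
proof -
  have summable_inside: "summable (\<lambda>n. q n * y^n)" if "norm y < 1" for y :: real
  proof (rule summable_comparison_test[OF _ q_summable])
    show "\<exists>N. \<forall>n\<ge>N. norm (q n * y ^ n) \<le> q n"
    proof (intro exI allI impI)
      fix n :: nat
      have "\<bar>y\<bar>^n \<le> 1" using that by (simp add: power_le_one)
      then show "norm (q n * y ^ n) \<le> q n"
        using q_nonneg[of n] by (simp add: abs_mult power_abs mult_left_le)
    qed
  qed
  have summable_diffs: "summable (\<lambda>n. diffs q n * x^n)"
    by (rule termdiff_converges[where K=1]) (use x summable_inside in auto)
  have "DERIV (\<lambda>x. \<Sum>n. q n * x^n) x :> (\<Sum>n. diffs q n * x^n)"
    by (rule termdiffs_strong[where K=1]) (use x q_summable in auto)
  then have deriv_eq: "deriv (genfun q) x = (\<Sum>n. diffs q n * x^n)"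
    by (simp add: DERIV_imp_deriv genfun_def[abs_def])
  define g where "g n = q n * (real n * x^(n-1))" for n
  have g_Suc: "(\<lambda>n. g (Suc n)) = (\<lambda>n. diffs q n * x^n)"
    by (simp add: g_def diffs_def fun_eq_iff)
  have "summable g" using summable_diffs g_Suc summable_Suc_iff[of g] by simp
  then show "summable (\<lambda>n. q n * (real n * x^(n-1)))" unfolding g_def .
  have "(\<Sum>n. g n) = (\<Sum>n. diffs q n * x^n)"
    using suminf_split_head[OF \<open>summable g\<close>] g_Suc by (simp add: g_def[of 0])
  then show "deriv (genfun q) x = (\<Sum>n. q n * (real n * x^(n-1)))"
    using deriv_eq by (simp add: g_def[abs_def])
qed

lemma bin_val_snoc: "bin_val (w @ [b]) = 2 * bin_val w + (if b then 1 else 0)"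
  by (simp add: bin_val_def)

lemma bin_val_less: "bin_val w < 2 ^ length w"
  by (induction w rule: rev_induct) (auto simp: bin_val_snoc bin_val_def)

lemma bin_val_block_le:
  assumes "length w + r = k"
  shows "bin_val w * 2^r + 2^r \<le> 2^k"
proof -
  have "(bin_val w + 1) * 2^r \<le> 2^length w * 2^r"
    using bin_val_less[of w] by (intro mult_le_mono1) simp
  also have "\<dots> = 2^k" using assms by (simp flip: power_add)
  finally show ?thesis by simp
qed

definition block_sum :: "(nat \<Rightarrow> real) \<Rightarrow> nat \<Rightarrow> nat \<Rightarrow> nat \<Rightarrow> real" where
  "block_sum z r a j = (\<Sum>i=1..2^r. (z (a+i) - z (a+i-1)) * (real j * (z (a+i-1) - z a)^(j-1)))"

lemma block_sum_Suc:
  "block_sum z (Suc r) a j = block_sum z r a j +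
     (\<Sum>i=1..2^r. (z (a+2^r+i) - z (a+2^r+i-1)) * (real j * (z (a+2^r+i-1) - z a)^(j-1)))"
proof -
  let ?t = "\<lambda>i. (z (a+i) - z (a+i-1)) * (real j * (z (a+i-1) - z a)^(j-1))"
  have "block_sum z (Suc r) a j = block_sum z r a j + (\<Sum>i=2^r+1..2^r+2^r. ?t i)"
    unfolding block_sum_def mult_2 power_Suc by (rule sum.ub_add_nat) simp
  also have "(\<Sum>i=2^r+1..2^r+2^r. ?t i) = (\<Sum>i=1..2^r. ?t (2^r + i))"
    using sum.shift_bounds_cl_nat_ivl[of ?t 1 "2^r" "2^r"] by (simp add: add.commute)
  finally show ?thesis by (simp add: add.assoc)
qed

lemma block_sum_binomial:
  "(\<Sum>e=1..j. real (j choose e) * L^(j-e) * block_sum z r a e)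
   = (\<Sum>i=1..2^r. (z (a+i) - z (a+i-1)) * (real j * (z (a+i-1) - z a + L)^(j-1)))"
proof -
  have "(\<Sum>e=1..j. real (j choose e) * L^(j-e) * block_sum z r a e)
     = (\<Sum>i=1..2^r. (z (a+i) - z (a+i-1)) *
          (\<Sum>e=1..j. real (j choose e) * (real e * (z (a+i-1) - z a)^(e-1)) * L^(j-e)))"
    unfolding block_sum_def sum_distrib_left by (subst sum.swap) (simp add: mult_ac)
  then show ?thesis by (simp only: sum_binomial_derivative)
qed

lemma succ_prob_Suc_scaled:
  assumes "D * p w = U" and "D * (1 - p w) = L"
  shows "D^j * succ_prob p (Suc r) w j =
     (\<Sum>e=1..j. real (j choose e) * L^(j-e) * (U^e * succ_prob p r (w @ [True]) e))
     + L^j * succ_prob p r (w @ [False]) j"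
proof -
  have "D^j * (\<Sum>e=1..j. real (j choose e) * p w ^ e * (1 - p w) ^ (j - e) * succ_prob p r (w @ [True]) e)
      = (\<Sum>e=1..j. real (j choose e) * L^(j-e) * (U^e * succ_prob p r (w @ [True]) e))"
    unfolding sum_distrib_left
  proof (rule sum.cong[OF refl])
    fix e assume "e \<in> {1..j}"
    then have "D^j = D^e * D^(j-e)" by (simp flip: power_add)
    then have "D^j * (real (j choose e) * p w ^ e * (1 - p w) ^ (j - e) * succ_prob p r (w @ [True]) e)
        = real (j choose e) * (D * (1 - p w))^(j-e) * ((D * p w)^e * succ_prob p r (w @ [True]) e)"
      by (simp add: power_mult_distrib mult_ac)
    then show "D^j * (real (j choose e) * p w ^ e * (1 - p w) ^ (j - e) * succ_prob p r (w @ [True]) e)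
        = real (j choose e) * L^(j-e) * (U^e * succ_prob p r (w @ [True]) e)"
      by (simp add: assms)
  qed
  moreover have "D^j * ((1 - p w) ^ j * succ_prob p r (w @ [False]) j) = L^j * succ_prob p r (w @ [False]) j"
    using assms(2) by (metis mult.assoc power_mult_distrib)
  ultimately show ?thesis by (simp add: distrib_left)
qed

lemma succ_prob_eq_block_sum:
  assumes mono: "strict_mono_on {0..2^k} z"
    and p: "\<And>v. length v < k \<Longrightarrow> p v = p_of_z k z v"
    and len: "length w + r = k"
  shows "(z (bin_val w * 2^r + 2^r) - z (bin_val w * 2^r))^j * succ_prob p r w j
         = block_sum z r (bin_val w * 2^r) j"
  using len
proof (induction r arbitrary: w j)
  case 0
  then show ?case by (cases "j = 0 \<or> j = 1") (auto simp: block_sum_def)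
next
  case (Suc r)
  define a where "a = bin_val w * 2^Suc r"
  define M where "M = a + 2^r"
  define R where "R = a + 2^Suc r"
  have "R \<le> 2^k" using bin_val_block_le[OF Suc.prems] by (simp add: R_def a_def)
  then have "z a < z M" "z M < z R"
    by (auto intro!: strict_mono_onD[OF mono] simp: M_def R_def)
  define U where "U = z R - z M"
  define L where "L = z M - z a"
  define D where "D = z R - z a"
  have "D > 0" using \<open>z a < z M\<close> \<open>z M < z R\<close> by (simp add: D_def)
  have "k - length w = Suc r" "k - Suc (length w) = r" using Suc.prems by auto
  then have "p w = U / D"
    using p[of w] Suc.prems by (simp add: p_of_z_def Let_def U_def D_def M_def R_def a_def)
  then have "D * p w = U" "D * (1 - p w) = L"
    using \<open>D > 0\<close> by (simp_all add: D_def U_def L_def field_simps)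
  have upper: "U^e * succ_prob p r (w @ [True]) e = block_sum z r M e" for e
    using Suc.IH[of "w @ [True]" e] Suc.prems
    by (simp add: bin_val_snoc algebra_simps U_def M_def R_def a_def)
  have lower: "L^j * succ_prob p r (w @ [False]) j = block_sum z r a j"
    using Suc.IH[of "w @ [False]" j] Suc.prems
    by (simp add: bin_val_snoc algebra_simps L_def M_def a_def)
  have "D^j * succ_prob p (Suc r) w j
      = (\<Sum>e=1..j. real (j choose e) * L^(j-e) * block_sum z r M e) + block_sum z r a j"
    unfolding succ_prob_Suc_scaled[where p=p and w=w, OF \<open>D * p w = U\<close> \<open>D * (1 - p w) = L\<close>]
    by (simp only: upper lower)
  also have "\<dots> = block_sum z (Suc r) a j"
    unfolding block_sum_binomial block_sum_Suc by (simp add: L_def M_def)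
  finally show ?case by (simp add: D_def R_def a_def)
qed

lemma rho_eq_sum_deriv_genfun:
  fixes q :: "nat \<Rightarrow> real"
  assumes q_nonneg: "\<And>n. q n \<ge> 0" and q_summable: "summable q"
    and z0: "z 0 = 0" and z1: "z (2^k) = 1" and mono: "strict_mono_on {0..2^k} z"
    and p: "\<And>v. length v < k \<Longrightarrow> p v = p_of_z k z v"
  shows "rho q k p = (\<Sum>i = 1..2 ^ k. (z i - z (i - 1)) * deriv (genfun q) (z (i - 1)))"
proof -
  have succ: "succ_prob p k [] n = (\<Sum>i=1..2^k. (z i - z (i-1)) * (real n * z (i-1) ^ (n-1)))" for n
    using succ_prob_eq_block_sum[OF mono p, of "[]" k n] by (simp add: bin_val_def block_sum_def z0 z1)
  have inside: "\<bar>z (i-1)\<bar> < 1" if "i \<in> {1..2^k}" for i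
  proof -
    have "z 0 \<le> z (i-1)" "z (i-1) < z (2^k)"
      using that by (auto intro: strict_mono_on_leD[OF mono] strict_mono_onD[OF mono])
    then show ?thesis using z0 z1 by simp
  qed
  note summable = summable_genfun_deriv[OF q_nonneg q_summable inside]
  have "rho q k p = (\<Sum>n. \<Sum>i=1..2^k. (z i - z (i-1)) * (q n * (real n * z (i-1) ^ (n-1))))"
    unfolding rho_def succ by (simp add: sum_distrib_left mult_ac)
  also have "\<dots> = (\<Sum>i=1..2^k. \<Sum>n. (z i - z (i-1)) * (q n * (real n * z (i-1) ^ (n-1))))"
    by (rule suminf_sum) (use summable summable_mult in blast)
  also have "\<dots> = (\<Sum>i = 1..2 ^ k. (z i - z (i - 1)) * deriv (genfun q) (z (i - 1)))"
  proof (rule sum.cong[OF refl])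
    fix i :: nat assume i: "i \<in> {1..2^k}"
    show "(\<Sum>n. (z i - z (i-1)) * (q n * (real n * z (i-1) ^ (n-1))))
        = (z i - z (i - 1)) * deriv (genfun q) (z (i - 1))"
      using suminf_mult[OF summable[OF i]] deriv_genfun[OF q_nonneg q_summable inside[OF i]] by simp
  qed
  finally show ?thesis .
qed

text \<open>The points z_0, ..., z_(2^r) of the subtree below history w, rescaled to [0,1].\<close>
fun points_of_protocol :: "(bool list \<Rightarrow> real) \<Rightarrow> nat \<Rightarrow> bool list \<Rightarrow> nat \<Rightarrow> real" where
  "points_of_protocol p 0 w i = (if i = 0 then 0 else 1)"
| "points_of_protocol p (Suc r) w i =
     (if i \<le> 2^r then (1 - p w) * points_of_protocol p r (w @ [False]) i
      else (1 - p w) + p w * points_of_protocol p r (w @ [True]) (i - 2^r))"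

lemma points_of_protocol_0 [simp]: "points_of_protocol p r w 0 = 0"
  by (induction r arbitrary: w) auto

lemma points_of_protocol_top [simp]: "points_of_protocol p r w (2^r) = 1"
  by (induction r arbitrary: w) auto

lemma points_of_protocol_upper:
  "2^r \<le> i \<Longrightarrow> points_of_protocol p (Suc r) w i = (1 - p w) + p w * points_of_protocol p r (w @ [True]) (i - 2^r)"
  by (cases "i = 2^r") auto

lemma strict_mono_points_of_protocol:
  assumes "\<And>v. length v < length w + r \<Longrightarrow> 0 < p v \<and> p v < 1"
  shows "strict_mono_on {0..2^r} (points_of_protocol p r w)"
  using assms
proof (induction r arbitrary: w)
  case 0
  show ?case by (rule strict_mono_onI) auto
next
  case (Suc r)
  let ?z = "points_of_protocol p r"
  have "0 < p w" "p w < 1" using Suc.prems by auto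
  have lower: "strict_mono_on {0..2^r} (?z (w @ [False]))"
    and upper: "strict_mono_on {0..2^r} (?z (w @ [True]))"
    using Suc.prems by (intro Suc.IH; auto)+
  show ?case
  proof (rule strict_mono_onI)
    fix i j :: nat assume i: "i \<in> {0..2^Suc r}" and j: "j \<in> {0..2^Suc r}" and "i < j"
    consider "j \<le> 2^r" | "2^r \<le> i" | "i < 2^r" "2^r < j" by linarith
    then show "points_of_protocol p (Suc r) w i < points_of_protocol p (Suc r) w j"
    proof cases
      case 1
      then have "?z (w @ [False]) i < ?z (w @ [False]) j"
        using strict_mono_onD[OF lower, of i j] \<open>i < j\<close> by auto
      then show ?thesis using 1 \<open>i < j\<close> \<open>0 < p w\<close> \<open>p w < 1\<close> by simp
    next
      case 2
      then have "?z (w @ [True]) (i - 2^r) < ?z (w @ [True]) (j - 2^r)"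
        using strict_mono_onD[OF upper, of "i - 2^r" "j - 2^r"] \<open>i < j\<close> j by auto
      moreover have "2^r \<le> j" using 2 \<open>i < j\<close> by simp
      ultimately show ?thesis
        unfolding points_of_protocol_upper[OF 2] points_of_protocol_upper[OF \<open>2^r \<le> j\<close>]
        using \<open>0 < p w\<close> by simp
    next
      case 3
      have "?z (w @ [False]) i \<le> 1"
        using strict_mono_onD[OF lower, of i "2^r"] 3 by auto
      moreover have "0 < ?z (w @ [True]) (j - 2^r)"
        using strict_mono_onD[OF upper, of 0 "j - 2^r"] 3 j by auto
      ultimately have "points_of_protocol p (Suc r) w i \<le> 1 - p w"
        and "1 - p w < points_of_protocol p (Suc r) w j"
        using 3 \<open>0 < p w\<close> \<open>p w < 1\<close> by (simp_all add: mult_left_le)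
      then show ?thesis by linarith
    qed
  qed
qed

lemma points_of_protocol_block_affine:
  assumes "\<And>v. length v < k \<Longrightarrow> 0 < p v \<and> p v < 1" and "length w + r = k"
  shows "\<exists>L D. D > 0 \<and> (\<forall>i \<le> 2^r.
           points_of_protocol p k [] (bin_val w * 2^r + i) = L + D * points_of_protocol p r w i)"
  using assms(2)
proof (induction w arbitrary: r rule: rev_induct)
  case Nil
  then show ?case by (intro exI[of _ 0] exI[of _ 1]) (simp add: bin_val_def)
next
  case (snoc b w)
  obtain L D where "D > 0" and LD: "\<And>i. i \<le> 2^Suc r \<Longrightarrow>
      points_of_protocol p k [] (bin_val w * 2^Suc r + i) = L + D * points_of_protocol p (Suc r) w i"
    using snoc.IH[of "Suc r"] snoc.prems by auto
  have "0 < p w" "p w < 1" using assms(1)[of w] snoc.prems by auto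
  show ?case
  proof (cases b)
    case False
    have "\<forall>i \<le> 2^r. points_of_protocol p k [] (bin_val (w @ [b]) * 2^r + i)
        = L + (D * (1 - p w)) * points_of_protocol p r (w @ [b]) i"
    proof (intro allI impI)
      fix i :: nat assume "i \<le> 2^r"
      have "bin_val (w @ [b]) * 2^r + i = bin_val w * 2^Suc r + i"
        using False by (simp add: bin_val_snoc)
      then show "points_of_protocol p k [] (bin_val (w @ [b]) * 2^r + i)
          = L + (D * (1 - p w)) * points_of_protocol p r (w @ [b]) i"
        using LD[of i] \<open>i \<le> 2^r\<close> False by (simp add: mult.assoc)
    qed
    moreover have "D * (1 - p w) > 0" using \<open>D > 0\<close> \<open>p w < 1\<close> by simp
    ultimately show ?thesis by blast
  next
    case True
    have "\<forall>i \<le> 2^r. points_of_protocol p k [] (bin_val (w @ [b]) * 2^r + i)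
        = (L + D * (1 - p w)) + (D * p w) * points_of_protocol p r (w @ [b]) i"
    proof (intro allI impI)
      fix i :: nat assume "i \<le> 2^r"
      have "bin_val (w @ [b]) * 2^r + i = bin_val w * 2^Suc r + (2^r + i)"
        using True by (simp add: bin_val_snoc algebra_simps)
      then show "points_of_protocol p k [] (bin_val (w @ [b]) * 2^r + i)
          = (L + D * (1 - p w)) + (D * p w) * points_of_protocol p r (w @ [b]) i"
        using LD[of "2^r + i"] \<open>i \<le> 2^r\<close> True
        by (simp add: points_of_protocol_upper algebra_simps)
    qed
    moreover have "D * p w > 0" using \<open>D > 0\<close> \<open>0 < p w\<close> by simp
    ultimately show ?thesis by blast
  qed
qed

lemma p_of_z_points_of_protocol:
  assumes p: "\<And>v. length v < k \<Longrightarrow> 0 < p v \<and> p v < 1" and "length w < k"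
  shows "p_of_z k (points_of_protocol p k []) w = p w"
proof -
  obtain r where r: "length w + Suc r = k" using \<open>length w < k\<close> by (metis add_Suc_right less_iff_Suc_add)
  obtain L D where "D > 0" and LD: "\<And>i. i \<le> 2^Suc r \<Longrightarrow>
      points_of_protocol p k [] (bin_val w * 2^Suc r + i) = L + D * points_of_protocol p (Suc r) w i"
    using points_of_protocol_block_affine[where p=p and w=w and r="Suc r", OF p r] by blast
  have "k - length w = Suc r" "k - length w - 1 = r" using r by auto
  then have "p_of_z k (points_of_protocol p k []) w
      = ((L + D) - (L + D * (1 - p w))) / ((L + D) - L)"
    using LD[of 0] LD[of "2^r"] LD[of "2^Suc r"] by (simp add: p_of_z_def Let_def)
  also have "\<dots> = p w" using \<open>D > 0\<close> by (simp add: field_simps)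
  finally show ?thesis .
qed

lemma p_of_z_bounds:
  assumes mono: "strict_mono_on {0..2^k} z" and "length w < k"
  shows "0 < p_of_z k z w \<and> p_of_z k z w < 1"
proof -
  obtain r where r: "k = length w + Suc r" using \<open>length w < k\<close> by (metis add_Suc_right less_iff_Suc_add)
  define a where "a = bin_val w * 2^Suc r"
  have "a + 2^Suc r \<le> 2^k" using bin_val_block_le[of w "Suc r" k] r by (simp add: a_def)
  then have "z a < z (a + 2^r)" "z (a + 2^r) < z (a + 2^Suc r)"
    by (auto intro!: strict_mono_onD[OF mono])
  moreover have exps: "k - length w = Suc r" "k - length w - 1 = r" using r by simp_all
  ultimately show ?thesis
    unfolding p_of_z_def Let_def exps a_def[symmetric] by (simp add: divide_less_eq)
qed

theorem proposition1:
  fixes k :: nat and q :: "nat \<Rightarrow> real"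
  assumes q_nonneg: "\<And>n. q n \<ge> 0"
    and q0: "q 0 = 0"
    and q_sum: "q sums 1"
  shows
    "(\<forall>p :: bool list \<Rightarrow> real.
        (\<forall>w. length w < k \<longrightarrow> 0 < p w \<and> p w < 1) \<longrightarrow>
        (\<exists>z :: nat \<Rightarrow> real.
            z 0 = 0 \<and> z (2 ^ k) = 1 \<and> strict_mono_on {0..2 ^ k} z \<and>
            rho q k p = (\<Sum>i = 1..2 ^ k. (z i - z (i - 1)) * deriv (genfun q) (z (i - 1))) \<and>
            (\<forall>w. length w < k \<longrightarrow> p w = p_of_z k z w)))
     \<and>
     (\<forall>z :: nat \<Rightarrow> real.
        z 0 = 0 \<and> z (2 ^ k) = 1 \<and> strict_mono_on {0..2 ^ k} z \<longrightarrow>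
        (\<forall>w. length w < k \<longrightarrow> 0 < p_of_z k z w \<and> p_of_z k z w < 1) \<and>
        rho q k (p_of_z k z) = (\<Sum>i = 1..2 ^ k. (z i - z (i - 1)) * deriv (genfun q) (z (i - 1))))"
proof -
  have q_summable: "summable q" using q_sum by (rule sums_summable)
  show ?thesis
  proof (rule conjI[OF allI[OF impI] allI[OF impI]])
    fix p :: "bool list \<Rightarrow> real"
    assume "\<forall>w. length w < k \<longrightarrow> 0 < p w \<and> p w < 1"
    then have p: "\<And>w. length w < k \<Longrightarrow> 0 < p w \<and> p w < 1" by blast
    let ?z = "points_of_protocol p k []"
    have mono: "strict_mono_on {0..2^k} ?z"
      using p by (intro strict_mono_points_of_protocol) simp
    have p_eq: "\<And>w. length w < k \<Longrightarrow> p w = p_of_z k ?z w"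
      using p_of_z_points_of_protocol[OF p] by simp
    show "\<exists>z. z 0 = 0 \<and> z (2 ^ k) = 1 \<and> strict_mono_on {0..2 ^ k} z \<and>
            rho q k p = (\<Sum>i = 1..2 ^ k. (z i - z (i - 1)) * deriv (genfun q) (z (i - 1))) \<and>
            (\<forall>w. length w < k \<longrightarrow> p w = p_of_z k z w)"
      using mono p_eq rho_eq_sum_deriv_genfun[OF q_nonneg q_summable _ _ mono p_eq]
      by (intro exI[of _ ?z]) simp
  next
    fix z :: "nat \<Rightarrow> real"
    assume z: "z 0 = 0 \<and> z (2 ^ k) = 1 \<and> strict_mono_on {0..2 ^ k} z"
    then show "(\<forall>w. length w < k \<longrightarrow> 0 < p_of_z k z w \<and> p_of_z k z w < 1) \<and>
        rho q k (p_of_z k z) = (\<Sum>i = 1..2 ^ k. (z i - z (i - 1)) * deriv (genfun q) (z (i - 1)))"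
      using p_of_z_bounds rho_eq_sum_deriv_genfun[OF q_nonneg q_summable] by blast
  qed
qed

end
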